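(* Let $p_{d,k,n}$ denote the number of directed plateau polyhypercubes of dimension $d$, width $k$ and lateral area $n$. Then for $d\geq 3$, $k\geq 1$ and $n\geq (d-1)k$, $$p_{d,k,n}=\sum_{j_2+j_3+\cdots+j_d=n}\ \prod_{l=2}^{d}\binom{j_l+k-2}{j_l-k},$$ where the sum is over nonnegative integers $j_2,\dots,j_d$.
   Context: Work in $\mathbb{Z}^d$ with orthonormal coordinate system $(0,\vec{i_1},\dots,\vec{i_d})$; a cell is a unit hypercube of the lattice. A polyhypercube of dimension $d$ is a finite union of cells, connected through their $(d-1)$-dimensional faces, defined up to translation. Its width is the number of distinct values of the $\vec{i_1}$-coordinate taken by its cells; its strata are its intersections with the layers of constant $\vec{i_1}$-coordinate. A plateau is a stratum that is a hyperrectangle. An elementary step is a positive move of one unit along one axis. A polyhypercube is directed if every cell can be reached from a distinguished root cell by a path of cells of the polyhypercube using only elementary steps. A directed plateau polyhypercube is a directed polyhypercube all of whose strata are plateaus. The lateral area of a polyhypercube is the sum, over $2\leq l\leq d$, of the areas (numbers of unit squares) of the polyominoes obtained by projecting it onto the planes $(\vec{i_1},\vec{i_l})$. Convention: for $n\geq 0$, $\binom{n}{k}=0$ when $k<0$ or $k>n$. *)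

theory Defs
  imports Main
begin

text \<open>A cell of Z^d is identified with its lower corner, a function nat => int
  whose coordinates 0..d-1 are meaningful (coordinate 0 is the i_1 axis,
  coordinate l is the i_(l+1) axis) and which vanishes from index d on.\<close>

type_synonym cell = "nat \<Rightarrow> int"

definition cells :: "nat \<Rightarrow> cell set" where
  "cells d = {c. \<forall>i\<ge>d. c i = 0}"

definition step_in :: "nat \<Rightarrow> cell set \<Rightarrow> cell \<Rightarrow> cell \<Rightarrow> bool" where
  "step_in d P x y \<longleftrightarrow> x \<in> P \<and> y \<in> P \<and> (\<exists>i<d. y = x(i := x i + 1))"

definition adj_in :: "nat \<Rightarrow> cell set \<Rightarrow> cell \<Rightarrow> cell \<Rightarrow> bool" where
  "adj_in d P x y \<longleftrightarrow> step_in d P x y \<or> step_in d P y x"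

definition polyhypercube :: "nat \<Rightarrow> cell set \<Rightarrow> bool" where
  "polyhypercube d P \<longleftrightarrow> finite P \<and> P \<noteq> {} \<and> P \<subseteq> cells d \<and>
     (\<forall>x\<in>P. \<forall>y\<in>P. (adj_in d P)\<^sup>*\<^sup>* x y)"

definition directed :: "nat \<Rightarrow> cell set \<Rightarrow> bool" where
  "directed d P \<longleftrightarrow> (\<exists>r\<in>P. \<forall>c\<in>P. (step_in d P)\<^sup>*\<^sup>* r c)"

definition width :: "cell set \<Rightarrow> nat" where
  "width P = card ((\<lambda>c. c 0) ` P)"

definition stratum :: "cell set \<Rightarrow> int \<Rightarrow> cell set" where
  "stratum P a = {c \<in> P. c 0 = a}"

definition plateau :: "nat \<Rightarrow> cell set \<Rightarrow> int \<Rightarrow> bool" where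
  "plateau d P a \<longleftrightarrow> (\<exists>lo hi :: nat \<Rightarrow> int.
     stratum P a = {c \<in> cells d. c 0 = a \<and> (\<forall>i\<in>{1..<d}. lo i \<le> c i \<and> c i \<le> hi i)})"

definition directed_plateau :: "nat \<Rightarrow> cell set \<Rightarrow> bool" where
  "directed_plateau d P \<longleftrightarrow> polyhypercube d P \<and> directed d P \<and>
     (\<forall>a \<in> (\<lambda>c. c 0) ` P. plateau d P a)"

text \<open>Lateral area: sum over l = 2..d (indices 1..d-1 here) of the areas of the
  projections onto the planes (i_1, i_l).\<close>
definition lateral_area :: "nat \<Rightarrow> cell set \<Rightarrow> nat" where
  "lateral_area d P = (\<Sum>l\<in>{1..<d}. card ((\<lambda>c. (c 0, c l)) ` P))"

definition translate :: "cell \<Rightarrow> cell set \<Rightarrow> cell set" where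
  "translate t P = (\<lambda>c. (\<lambda>i. c i + t i)) ` P"

definition transl_class :: "nat \<Rightarrow> cell set \<Rightarrow> cell set set" where
  "transl_class d P = {Q. \<exists>t\<in>cells d. Q = translate t P}"

definition p_count :: "nat \<Rightarrow> nat \<Rightarrow> nat \<Rightarrow> nat" where
  "p_count d k n = card (transl_class d `
     {P. directed_plateau d P \<and> width P = k \<and> lateral_area d P = n})"

definition ibinom :: "int \<Rightarrow> int \<Rightarrow> nat" where
  "ibinom a b = (if 0 \<le> b \<and> b \<le> a then nat a choose nat b else 0)"

end

theory Submission
  imports Defs "HOL-Library.FuncSet"
begin

text \<open>
  A translation class is counted through its unique representative whose root is the
  origin and whose cells have nonnegative coordinates. The strata of this representative
  are boxes \<open>[lo t, hi t]\<close> (\<open>t < k\<close>), and directedness amounts to \<open>lo 0 = 0\<close> and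
  \<open>lo t \<le> lo (t+1) \<le> hi t\<close> coordinatewise. Hence the directions \<open>l = 2..d\<close> decouple:
  in each of them one chooses a stack of \<open>k\<close> segments of heights \<open>h t \<ge> 1\<close>, each one
  starting within the previous one, which leaves \<open>h t\<close> choices for the start of segment
  \<open>t + 1\<close>. This stack is the projection onto the plane \<open>(i_1, i_l)\<close>, of area
  \<open>j_l = h 0 + \<dots> + h (k-1)\<close>. So the count is a sum over \<open>j_2 + \<dots> + j_d = n\<close> of a
  product of one-dimensional counts, and the number of stacks of area \<open>m\<close> is the sum of
  \<open>h 0 \<cdot> \<dots> \<cdot> h (k-2)\<close> over the compositions of \<open>m\<close> into \<open>k\<close> positive parts, which is
  \<open>C(m+k-2, 2k-2)\<close> by iterated convolution of binomial coefficients.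
\<close>

section \<open>Counting functions by total weight\<close>

definition compositions :: "nat set \<Rightarrow> nat \<Rightarrow> (nat \<Rightarrow> nat) set" where
  "compositions I n = {j. (\<forall>i. i \<notin> I \<longrightarrow> j i = 0) \<and> sum j I = n}"

lemma finite_compositions:
  assumes "finite I"
  shows "finite (compositions I n)"
proof (rule finite_subset)
  show "compositions I n \<subseteq> {j. \<forall>i. (i \<in> I \<longrightarrow> j i \<in> {..n}) \<and> (i \<notin> I \<longrightarrow> j i = 0)}"
    using assms by (auto simp: compositions_def intro!: member_le_sum)
  show "finite {j. \<forall>i. (i \<in> I \<longrightarrow> j i \<in> {..n}) \<and> (i \<notin> I \<longrightarrow> j i = 0)}"
    using assms by (intro finite_set_of_finite_funs) auto
qed

lemma compositions_empty: "compositions {} n = (if n = 0 then {\<lambda>_. 0} else {})"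
  by (auto simp: compositions_def)

lemma PiE_weight_eq_UN_compositions:
  assumes "finite I"
  shows "{\<phi> \<in> PiE I S. (\<Sum>i\<in>I. w (\<phi> i)) = n} =
    (\<Union>j\<in>compositions I n. PiE I (\<lambda>i. {s \<in> S i. w s = j i}))"
proof (intro equalityI subsetI)
  fix \<phi> assume \<phi>: "\<phi> \<in> {\<phi> \<in> PiE I S. (\<Sum>i\<in>I. w (\<phi> i)) = n}"
  define j where "j i = (if i \<in> I then w (\<phi> i) else 0)" for i
  have "j \<in> compositions I n" and "\<phi> \<in> PiE I (\<lambda>i. {s \<in> S i. w s = j i})"
    using \<phi> by (auto simp: compositions_def j_def)
  then show "\<phi> \<in> (\<Union>j\<in>compositions I n. PiE I (\<lambda>i. {s \<in> S i. w s = j i}))" by blast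
next
  fix \<phi> assume "\<phi> \<in> (\<Union>j\<in>compositions I n. PiE I (\<lambda>i. {s \<in> S i. w s = j i}))"
  then obtain j where j: "j \<in> compositions I n" and \<phi>: "\<phi> \<in> PiE I (\<lambda>i. {s \<in> S i. w s = j i})"
    by blast
  have "(\<Sum>i\<in>I. w (\<phi> i)) = sum j I" using \<phi> by (intro sum.cong) auto
  then show "\<phi> \<in> {\<phi> \<in> PiE I S. (\<Sum>i\<in>I. w (\<phi> i)) = n}" using j \<phi> by (auto simp: compositions_def)
qed

lemma finite_PiE_weight:
  fixes I :: "nat set" and w :: "'a \<Rightarrow> nat"
  assumes "finite I" and "\<And>i m. i \<in> I \<Longrightarrow> finite {s \<in> S i. w s = m}"
  shows "finite {\<phi> \<in> PiE I S. (\<Sum>i\<in>I. w (\<phi> i)) = n}"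
  unfolding PiE_weight_eq_UN_compositions[OF assms(1)]
  using assms by (intro finite_UN_I finite_compositions finite_PiE) auto

lemma card_PiE_weight:
  assumes "finite I" and "\<And>i m. i \<in> I \<Longrightarrow> finite {s \<in> S i. w s = m}"
  shows "card {\<phi> \<in> PiE I S. (\<Sum>i\<in>I. w (\<phi> i)) = n} =
    (\<Sum>j\<in>compositions I n. \<Prod>i\<in>I. card {s \<in> S i. w s = j i})"
proof -
  let ?F = "\<lambda>j. PiE I (\<lambda>i. {s \<in> S i. w s = j i})"
  have disjoint: "?F j \<inter> ?F j' = {}"
    if j: "j \<in> compositions I n" and j': "j' \<in> compositions I n" and "j \<noteq> j'" for j j'
  proof -
    obtain i where i: "j i \<noteq> j' i" using \<open>j \<noteq> j'\<close> by (auto simp: fun_eq_iff)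
    have "i \<in> I" using i j j' by (cases "i \<in> I") (auto simp: compositions_def)
    then show ?thesis using i by (auto simp: PiE_iff)
  qed
  have "card {\<phi> \<in> PiE I S. (\<Sum>i\<in>I. w (\<phi> i)) = n} = (\<Sum>j\<in>compositions I n. card (?F j))"
    unfolding PiE_weight_eq_UN_compositions[OF assms(1)]
    using assms disjoint by (intro card_UN_disjoint finite_compositions ballI impI finite_PiE) auto
  then show ?thesis using assms(1) by (simp add: card_PiE)
qed

lemma sum_compositions_insert:
  fixes f :: "nat \<Rightarrow> nat \<Rightarrow> 'a :: comm_semiring_1"
  assumes "finite I" and "i \<notin> I"
  shows "(\<Sum>j\<in>compositions (insert i I) n. \<Prod>t\<in>insert i I. f t (j t)) =
    (\<Sum>a\<le>n. f i a * (\<Sum>j\<in>compositions I (n - a). \<Prod>t\<in>I. f t (j t)))"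
proof -
  have "(\<Sum>a\<le>n. f i a * (\<Sum>j\<in>compositions I (n - a). \<Prod>t\<in>I. f t (j t))) =
      (\<Sum>(a, j)\<in>Sigma {..n} (\<lambda>a. compositions I (n - a)). f i a * (\<Prod>t\<in>I. f t (j t)))"
    by (simp add: sum_distrib_left sum.Sigma finite_compositions assms(1))
  also have "\<dots> = (\<Sum>j\<in>compositions (insert i I) n. \<Prod>t\<in>insert i I. f t (j t))"
  proof (rule sum.reindex_bij_witness
      [where i = "\<lambda>j. (j i, j(i := 0))" and j = "\<lambda>(a, j). j(i := a)"])
    fix p assume "p \<in> Sigma {..n} (\<lambda>a. compositions I (n - a))"
    then obtain a j where p: "p = (a, j)" "a \<le> n" and j: "j \<in> compositions I (n - a)" by auto
    have "j i = 0" using j assms(2) by (auto simp: compositions_def)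
    then show "(\<lambda>j. (j i, j(i := 0))) ((\<lambda>(a, j). j(i := a)) p) = p" using p by auto
    have "sum (j(i := a)) I = sum j I" "(\<Prod>t\<in>I. f t ((j(i := a)) t)) = (\<Prod>t\<in>I. f t (j t))"
      using assms(2) by (auto intro!: sum.cong prod.cong)
    then show "(\<lambda>(a, j). j(i := a)) p \<in> compositions (insert i I) n"
      and "(\<Prod>t\<in>insert i I. f t ((\<lambda>(a, j). j(i := a)) p t)) =
        (case p of (a, j) \<Rightarrow> f i a * (\<Prod>t\<in>I. f t (j t)))"
      using p j assms by (auto simp: compositions_def)
  next
    fix j assume j: "j \<in> compositions (insert i I) n"
    show "(\<lambda>(a, j). j(i := a)) (j i, j(i := 0)) = j" by auto
    have "sum (j(i := 0)) I = sum j I" using assms(2) by (intro sum.cong) auto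
    then show "(j i, j(i := 0)) \<in> Sigma {..n} (\<lambda>a. compositions I (n - a))"
      using j assms by (auto simp: compositions_def)
  qed
  finally show ?thesis ..
qed

section \<open>Binomial sums\<close>

lemma sum_lessThan_add_choose: "c < r \<Longrightarrow> (\<Sum>b<m. (b + c) choose r) = (m + c) choose Suc r"
  by (induction m) auto

lemma sum_atMost_mult_choose:
  assumes "c < r"
  shows "(\<Sum>a\<le>x. a * ((x - a + c) choose r)) = (x + c + 1) choose (r + 2)"
proof (induction x)
  case 0
  then show ?case using assms by simp
next
  case (Suc x)
  have "(\<Sum>a\<le>x. (x - a + c) choose r) = (\<Sum>b<Suc x. (b + c) choose r)"
    using sum.nat_diff_reindex[of "\<lambda>b. (b + c) choose r" "Suc x"] by (simp add: lessThan_Suc_atMost)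
  also have "\<dots> = (Suc x + c) choose Suc r"
    using assms by (simp add: sum_lessThan_add_choose)
  finally have last_row: "(\<Sum>a\<le>x. (x - a + c) choose r) = (Suc x + c) choose Suc r" .
  have "(\<Sum>a\<le>Suc x. a * ((Suc x - a + c) choose r)) = (\<Sum>a\<le>x. Suc a * ((x - a + c) choose r))"
    by (subst sum.atMost_Suc_shift) simp
  also have "\<dots> = (\<Sum>a\<le>x. a * ((x - a + c) choose r)) + (\<Sum>a\<le>x. (x - a + c) choose r)"
    by (simp add: sum.distrib)
  finally show ?case using Suc last_row by simp
qed

lemma sum_prod_compositions_Suc:
  "(\<Sum>j\<in>compositions {..<Suc k} x. \<Prod>t<Suc k. j t) =
    (\<Sum>a\<le>x. a * (\<Sum>j\<in>compositions {..<k} (x - a). \<Prod>t<k. j t))"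
  using sum_compositions_insert[of "{..<k}" k "\<lambda>_ a. a" x] by (simp add: lessThan_Suc)

lemma sum_prod_compositions:
  "1 \<le> k \<Longrightarrow> (\<Sum>j\<in>compositions {..<k} x. \<Prod>t<k. j t) = (x + k - 1) choose (2 * k - 1)"
proof (induction k arbitrary: x rule: nat_induct_at_least)
  case base
  have "(\<Sum>j\<in>compositions {..<1} x. \<Prod>t<1. j t) =
      (\<Sum>a\<le>x. a * (\<Sum>j\<in>compositions {} (x - a). \<Prod>t\<in>{}. j t))"
    using sum_prod_compositions_Suc[of 0 x] by simp
  also have "\<dots> = (\<Sum>a\<le>x. if a = x then a else 0)"
    by (intro sum.cong) (auto simp: compositions_empty)
  finally show ?case by simp
next
  case (Suc k)
  have "(\<Sum>j\<in>compositions {..<Suc k} x. \<Prod>t<Suc k. j t) =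
      (\<Sum>a\<le>x. a * ((x - a + (k - 1)) choose (2 * k - 1)))"
    unfolding sum_prod_compositions_Suc Suc.IH using Suc.hyps by simp
  also have "\<dots> = (x + (k - 1) + 1) choose (2 * k - 1 + 2)"
    using Suc by (intro sum_atMost_mult_choose) auto
  finally show ?case using Suc by (simp add: algebra_simps)
qed

lemma sum_atMost_min_1_mult: "(\<Sum>a\<le>m. min a 1 * g (m - a)) = (\<Sum>b<m. g b :: nat)"
proof (cases m)
  case (Suc m')
  have "(\<Sum>a\<le>m. min a 1 * g (m - a)) = (\<Sum>a<Suc m'. g (Suc m' - Suc a))"
    unfolding Suc by (subst sum.atMost_Suc_shift) (simp add: lessThan_Suc_atMost)
  also have "\<dots> = (\<Sum>b<Suc m'. g b)"
    by (rule sum.nat_diff_reindex)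
  finally show ?thesis using Suc by simp
qed simp

lemma ibinom_eq_choose:
  assumes "1 \<le> k"
  shows "ibinom (int m + int k - 2) (int m - int k) =
    (if m = 0 then 0 else (m + k - 2) choose (2 * k - 2))"
proof (cases "k \<le> m")
  case True
  have "(m + k - 2) choose (2 * k - 2) = (m + k - 2) choose (m + k - 2 - (2 * k - 2))"
    using True by (intro binomial_symmetric) auto
  moreover have "nat (int m + int k - 2) = m + k - 2"
    and "nat (int m - int k) = m + k - 2 - (2 * k - 2)"
    using True assms by auto
  ultimately show ?thesis using True assms by (simp add: ibinom_def)
next
  case False
  then show ?thesis using assms by (auto simp: ibinom_def binomial_eq_0)
qed

section \<open>Stacks of segments\<close>

text \<open>
  A profile of width \<open>k\<close> codes a stack of \<open>k\<close> vertical segments: \<open>fst (pr t)\<close> is the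
  height of segment \<open>t\<close>, and segment \<open>t + 1\<close> starts \<open>snd (pr t)\<close> units above the bottom of
  segment \<open>t\<close>.
\<close>

definition segments :: "nat \<Rightarrow> nat \<Rightarrow> (nat \<times> nat) set" where
  "segments k t = {s. 1 \<le> fst s \<and> (if t < k - 1 then snd s < fst s else snd s = 0)}"

definition profiles :: "nat \<Rightarrow> (nat \<Rightarrow> nat \<times> nat) set" where
  "profiles k = PiE {..<k} (segments k)"

definition area :: "nat \<Rightarrow> (nat \<Rightarrow> nat \<times> nat) \<Rightarrow> nat" where
  "area k pr = (\<Sum>t<k. fst (pr t))"

lemma segments_height_eq:
  "{s \<in> segments k t. fst s = a} =
    (if a = 0 then {} else if t < k - 1 then {a} \<times> {..<a} else {(a, 0)})"
  by (auto simp: segments_def)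

lemma finite_segments_height: "finite {s \<in> segments k t. fst s = a}"
  by (simp add: segments_height_eq)

lemma card_segments_height:
  "card {s \<in> segments k t. fst s = a} = (if t < k - 1 then a else min a 1)"
  by (simp add: segments_height_eq card_cartesian_product)

lemma finite_profiles_area: "finite {pr \<in> profiles k. area k pr = m}"
  unfolding profiles_def area_def by (rule finite_PiE_weight) (simp_all add: finite_segments_height)

lemma card_profiles_area:
  assumes "1 \<le> k"
  shows "card {pr \<in> profiles k. area k pr = m} =
    (if m = 0 then 0 else (m + k - 2) choose (2 * k - 2))"
proof -
  let ?W = "\<lambda>x. \<Sum>j\<in>compositions {..<k - 1} x. \<Prod>t<k - 1. j t"
  have split: "{..<k} = insert (k - 1) {..<k - 1}" using assms by auto
  have "card {pr \<in> profiles k. area k pr = m} =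
      (\<Sum>j\<in>compositions {..<k} m. \<Prod>t<k. if t < k - 1 then j t else min (j t) 1)"
    unfolding profiles_def area_def
    by (subst card_PiE_weight) (simp_all add: finite_segments_height card_segments_height)
  also have "\<dots> = (\<Sum>a\<le>m. min a 1 * ?W (m - a))"
    unfolding split by (subst sum_compositions_insert) simp_all
  also have "\<dots> = (\<Sum>b<m. ?W b)"
    by (rule sum_atMost_min_1_mult)
  also have "\<dots> = (if m = 0 then 0 else (m + k - 2) choose (2 * k - 2))"
  proof (cases "k = 1")
    case True
    then have "?W b = (if b = 0 then 1 else 0)" for b by (simp add: compositions_empty)
    then show ?thesis using True by simp
  next
    case False
    have k: "1 \<le> k - 1" using False assms by auto
    have "?W b = (b + (k - 2)) choose (2 * k - 3)" for b
    proof -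
      have "b + (k - 1) - 1 = b + (k - 2)" and "2 * (k - 1) - 1 = 2 * k - 3" using k by auto
      with sum_prod_compositions[OF k, of b] show ?thesis by argo
    qed
    then have "(\<Sum>b<m. ?W b) = (\<Sum>b<m. (b + (k - 2)) choose (2 * k - 3))"
      by simp
    also have "\<dots> = (m + (k - 2)) choose Suc (2 * k - 3)"
      using k by (intro sum_lessThan_add_choose) auto
    also have "\<dots> = (m + k - 2) choose (2 * k - 2)"
      using k by (simp add: Suc_diff_Suc numeral_3_eq_3 numeral_2_eq_2)
    finally show ?thesis using k by (auto simp: binomial_eq_0)
  qed
  finally show ?thesis .
qed

definition seg_bottom :: "(nat \<Rightarrow> nat \<times> nat) \<Rightarrow> nat \<Rightarrow> int" where
  "seg_bottom pr t = int (\<Sum>s<t. snd (pr s))"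

definition seg_top :: "(nat \<Rightarrow> nat \<times> nat) \<Rightarrow> nat \<Rightarrow> int" where
  "seg_top pr t = seg_bottom pr t + int (fst (pr t)) - 1"

lemma seg_bottom_0 [simp]: "seg_bottom pr 0 = 0"
  by (simp add: seg_bottom_def)

lemma seg_bottom_Suc: "seg_bottom pr (Suc t) = seg_bottom pr t + int (snd (pr t))"
  by (simp add: seg_bottom_def)

lemma seg_bottom_nonneg: "0 \<le> seg_bottom pr t"
  unfolding seg_bottom_def by (rule of_nat_0_le_iff)

lemma profile_segment: "pr \<in> profiles k \<Longrightarrow> t < k \<Longrightarrow> pr t \<in> segments k t"
  by (auto simp: profiles_def)

lemma seg_bottom_le_top: "pr \<in> profiles k \<Longrightarrow> t < k \<Longrightarrow> seg_bottom pr t \<le> seg_top pr t"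
  by (drule profile_segment) (auto simp: segments_def seg_top_def)

lemma seg_bottom_Suc_between:
  assumes "pr \<in> profiles k" and "Suc t < k"
  shows "seg_bottom pr t \<le> seg_bottom pr (Suc t) \<and> seg_bottom pr (Suc t) \<le> seg_top pr t"
  using profile_segment[OF assms(1), of t] assms(2)
  by (auto simp: segments_def seg_top_def seg_bottom_Suc)

lemma profile_eqI:
  assumes "pr \<in> profiles k" and "pr' \<in> profiles k"
    and "\<And>t. t < k \<Longrightarrow> seg_bottom pr t = seg_bottom pr' t"
    and "\<And>t. t < k \<Longrightarrow> seg_top pr t = seg_top pr' t"
  shows "pr = pr'"
proof (rule PiE_ext[OF assms(1,2)[unfolded profiles_def]])
  fix t assume t: "t \<in> {..<k}"
  show "pr t = pr' t"
  proof (rule prod_eqI)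
    show "fst (pr t) = fst (pr' t)" using assms(3,4)[of t] t by (simp add: seg_top_def)
    show "snd (pr t) = snd (pr' t)"
    proof (cases "Suc t < k")
      case True
      then show ?thesis using assms(3)[of t] assms(3)[of "Suc t"] by (simp add: seg_bottom_Suc)
    next
      case False
      then show ?thesis
        using profile_segment[OF assms(1), of t] profile_segment[OF assms(2), of t] t
        by (simp add: segments_def)
    qed
  qed
qed

lemma profile_of_bounds:
  fixes lo hi :: "nat \<Rightarrow> int"
  assumes "lo 0 = 0" and "\<And>t. t < k \<Longrightarrow> lo t \<le> hi t"
    and "\<And>t. Suc t < k \<Longrightarrow> lo t \<le> lo (Suc t) \<and> lo (Suc t) \<le> hi t"
  shows "\<exists>pr\<in>profiles k. \<forall>t<k. seg_bottom pr t = lo t \<and> seg_top pr t = hi t"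
proof -
  define pr where "pr = (\<lambda>t\<in>{..<k}. (nat (hi t - lo t + 1),
    if t < k - 1 then nat (lo (Suc t) - lo t) else 0))"
  have "1 \<le> nat (hi t - lo t + 1)" if "t < k" for t using assms(2)[OF that] by simp
  then have "pr \<in> profiles k" using assms(2,3) by (auto simp: profiles_def segments_def pr_def)
  moreover have bottom: "seg_bottom pr t = lo t" if "t < k" for t
    using that
  proof (induction t)
    case (Suc t)
    then show ?case using assms(3)[of t] by (simp add: seg_bottom_Suc pr_def less_diff_conv)
  qed (simp add: assms(1))
  moreover have "seg_top pr t = hi t" if "t < k" for t
    using bottom[OF that] assms(2)[OF that] that by (simp add: seg_top_def pr_def)
  ultimately show ?thesis by blast
qed

section \<open>Boxes of cells\<close>

lemma mem_int_interval_iff: "a \<in> {b..<b + int k} \<longleftrightarrow> (\<exists>t<k. a = b + int t)"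
  by (auto intro!: exI[of _ "nat (a - b)"])

definition mk_cell :: "nat \<Rightarrow> int \<Rightarrow> (nat \<Rightarrow> int) \<Rightarrow> cell" where
  "mk_cell d a f = (\<lambda>i. if i = 0 then a else if i < d then f i else 0)"

definition box :: "nat \<Rightarrow> int \<Rightarrow> (nat \<Rightarrow> int) \<Rightarrow> (nat \<Rightarrow> int) \<Rightarrow> cell set" where
  "box d a lo hi = {c \<in> cells d. c 0 = a \<and> (\<forall>i\<in>{1..<d}. lo i \<le> c i \<and> c i \<le> hi i)}"

lemma mk_cell_0 [simp]: "mk_cell d a f 0 = a"
  by (simp add: mk_cell_def)

lemma mk_cell_coord [simp]: "i \<in> {1..<d} \<Longrightarrow> mk_cell d a f i = f i"
  by (simp add: mk_cell_def)

lemma mk_cell_zero [simp]: "mk_cell d 0 (\<lambda>_. 0) = (\<lambda>_. 0)"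
  by (simp add: mk_cell_def fun_eq_iff)

lemma mk_cell_in_box:
  "0 < d \<Longrightarrow> (\<And>i. i \<in> {1..<d} \<Longrightarrow> lo i \<le> f i \<and> f i \<le> hi i) \<Longrightarrow> mk_cell d a f \<in> box d a lo hi"
  by (auto simp: box_def cells_def mk_cell_def)

lemma plateau_iff_box: "plateau d P a \<longleftrightarrow> (\<exists>lo hi. stratum P a = box d a lo hi)"
  by (simp add: plateau_def box_def)

lemma box_subset_cells: "box d a lo hi \<subseteq> cells d"
  by (auto simp: box_def)

lemma box_cong:
  "(\<And>i. i \<in> {1..<d} \<Longrightarrow> lo i = lo' i \<and> hi i = hi' i) \<Longrightarrow> box d a lo hi = box d a lo' hi'"
  by (simp add: box_def)

lemma finite_box: "finite (box d a lo hi)"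
proof (rule finite_subset)
  let ?B = "insert a (\<Union>i\<in>{1..<d}. {lo i..hi i})"
  show "box d a lo hi \<subseteq> {c. \<forall>i. (i \<in> {..<d} \<longrightarrow> c i \<in> ?B) \<and> (i \<notin> {..<d} \<longrightarrow> c i = 0)}"
  proof
    fix c assume c: "c \<in> box d a lo hi"
    have "c i \<in> ?B" if "i < d" for i
    proof (cases "i = 0")
      case False
      then have "i \<in> {1..<d}" using that by auto
      moreover from this have "c i \<in> {lo i..hi i}" using c by (simp add: box_def)
      ultimately show ?thesis by blast
    qed (use c in \<open>simp add: box_def\<close>)
    moreover have "c i = 0" if "\<not> i < d" for i
      using c that by (auto simp: box_def cells_def)
    ultimately show "c \<in> {c. \<forall>i. (i \<in> {..<d} \<longrightarrow> c i \<in> ?B) \<and> (i \<notin> {..<d} \<longrightarrow> c i = 0)}"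
      by auto
  qed
  show "finite {c. \<forall>i. (i \<in> {..<d} \<longrightarrow> c i \<in> ?B) \<and> (i \<notin> {..<d} \<longrightarrow> c i = 0)}"
    by (intro finite_set_of_finite_funs) auto
qed

lemma box_bounds_unique:
  assumes "0 < d" and eq: "box d a lo hi = box d a lo' hi'"
    and "\<And>i. i \<in> {1..<d} \<Longrightarrow> lo i \<le> hi i" and "\<And>i. i \<in> {1..<d} \<Longrightarrow> lo' i \<le> hi' i"
    and i: "i \<in> {1..<d}"
  shows "lo i = lo' i \<and> hi i = hi' i"
proof -
  have "mk_cell d a lo \<in> box d a lo' hi'" "mk_cell d a hi \<in> box d a lo' hi'"
    using assms(1,3) by (auto simp flip: eq intro!: mk_cell_in_box)
  moreover have "mk_cell d a lo' \<in> box d a lo hi" "mk_cell d a hi' \<in> box d a lo hi"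
    using assms(1,4) by (auto simp: eq intro!: mk_cell_in_box)
  ultimately have "lo' i \<le> lo i" "lo i \<le> lo' i" "hi i \<le> hi' i" "hi' i \<le> hi i"
    using i by (auto simp: box_def)
  then show ?thesis by simp
qed

lemma box_between:
  assumes "x \<in> box d a lo hi" and "y \<in> box d a lo hi" and "z \<in> cells d" and "z 0 = a"
    and "\<And>i. x i \<le> z i \<and> z i \<le> y i"
  shows "z \<in> box d a lo hi"
proof -
  have "lo i \<le> z i \<and> z i \<le> hi i" if "i \<in> {1..<d}" for i
    using assms(1,2) assms(5)[of i] that unfolding box_def by fastforce
  then show ?thesis using assms(3,4) by (simp add: box_def)
qed

lemma proj_box:
  assumes "0 < d" and "\<And>i. i \<in> {1..<d} \<Longrightarrow> lo i \<le> hi i" and l: "l \<in> {1..<d}"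
  shows "(\<lambda>c. (c 0, c l)) ` box d a lo hi = {a} \<times> {lo l..hi l}"
proof
  show "(\<lambda>c. (c 0, c l)) ` box d a lo hi \<subseteq> {a} \<times> {lo l..hi l}"
    using l by (auto simp: box_def)
  show "{a} \<times> {lo l..hi l} \<subseteq> (\<lambda>c. (c 0, c l)) ` box d a lo hi"
  proof
    fix p assume "p \<in> {a} \<times> {lo l..hi l}"
    then obtain y where p: "p = (a, y)" and y: "lo l \<le> y" "y \<le> hi l" by auto
    have "mk_cell d a (lo(l := y)) \<in> box d a lo hi"
      using assms y by (intro mk_cell_in_box) auto
    moreover have "p = (\<lambda>c. (c 0, c l)) (mk_cell d a (lo(l := y)))"
      using p l by simp
    ultimately show "p \<in> (\<lambda>c. (c 0, c l)) ` box d a lo hi" by blast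
  qed
qed

lemma translate_UN: "translate r (\<Union>i\<in>I. A i) = (\<Union>i\<in>I. translate r (A i))"
  by (simp add: translate_def image_UN)

lemma translate_box:
  assumes "r \<in> cells d"
  shows "translate r (box d a lo hi) = box d (a + r 0) (\<lambda>i. lo i + r i) (\<lambda>i. hi i + r i)"
proof
  show "translate r (box d a lo hi) \<subseteq> box d (a + r 0) (\<lambda>i. lo i + r i) (\<lambda>i. hi i + r i)"
    using assms by (auto simp: translate_def box_def cells_def)
  show "box d (a + r 0) (\<lambda>i. lo i + r i) (\<lambda>i. hi i + r i) \<subseteq> translate r (box d a lo hi)"
  proof
    fix c assume c: "c \<in> box d (a + r 0) (\<lambda>i. lo i + r i) (\<lambda>i. hi i + r i)"
    have "(\<lambda>i. c i - r i) \<in> box d a lo hi"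
      using c assms by (auto simp: box_def cells_def)
    then show "c \<in> translate r (box d a lo hi)"
      unfolding translate_def by (rule rev_image_eqI) simp
  qed
qed

lemma rtranclp_step_in_imp_adj_in:
  assumes "(step_in d P)\<^sup>*\<^sup>* x y"
  shows "(adj_in d P)\<^sup>*\<^sup>* x y \<and> (adj_in d P)\<^sup>*\<^sup>* y x"
  using assms
proof (induction rule: rtranclp_induct)
  case (step y z)
  then have "adj_in d P y z" "adj_in d P z y" by (simp_all add: adj_in_def)
  with step.IH show ?case
    using rtranclp.rtrancl_into_rtrancl converse_rtranclp_into_rtranclp by metis
qed simp

lemma step_in_rtranclp_le:
  assumes "(step_in d P)\<^sup>*\<^sup>* x y"
  shows "x i \<le> y i"
  using assms
proof (induction rule: rtranclp_induct)
  case (step y z)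
  then obtain j where "z = y(j := y j + 1)" by (auto simp: step_in_def)
  then show ?case using step.IH by auto
qed simp

lemma step_in_rtranclp_levels:
  assumes "(step_in d P)\<^sup>*\<^sup>* r c" and "r \<in> P" and "r 0 \<le> s" and "s \<le> c 0"
  shows "s \<in> (\<lambda>c. c 0) ` P"
  using assms
proof (induction arbitrary: s rule: rtranclp_induct)
  case (step y z)
  obtain i where z: "z \<in> P" "z = y(i := y i + 1)" using step.hyps(2) by (auto simp: step_in_def)
  show ?case
  proof (cases "s \<le> y 0")
    case True
    then show ?thesis using step by blast
  next
    case False
    then have "s = z 0" using z step.prems by (auto split: if_splits)
    then show ?thesis using z(1) by blast
  qed
qed auto

lemma rtranclp_step_in_box:
  assumes "box d a lo hi \<subseteq> P"
  shows "x \<in> box d a lo hi \<Longrightarrow> y \<in> box d a lo hi \<Longrightarrow> \<forall>i. x i \<le> y i \<Longrightarrow> (step_in d P)\<^sup>*\<^sup>* x y"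
proof (induction "\<Sum>i<d. nat (y i - x i)" arbitrary: x rule: less_induct)
  case less
  show ?case
  proof (cases "\<exists>i<d. x i < y i")
    case False
    have "x j = y j" for j
    proof (cases "j < d")
      case True
      then have "\<not> x j < y j" "x j \<le> y j" using False less.prems(3) by auto
      then show ?thesis by simp
    next
      case False
      then show ?thesis using less.prems(1,2) by (simp add: box_def cells_def)
    qed
    then have "x = y" by (rule ext)
    then show ?thesis by simp
  next
    case True
    then obtain i where i: "i < d" "x i < y i" by blast
    let ?x' = "x(i := x i + 1)"
    have "i \<noteq> 0"
    proof
      assume "i = 0"
      then show False using i(2) less.prems(1,2) by (simp add: box_def)
    qed
    have x': "?x' \<in> box d a lo hi"
    proof (rule box_between[OF less.prems(1,2)])
      show "?x' \<in> cells d" using less.prems(1) i(1) by (auto simp: box_def cells_def)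
      show "?x' 0 = a" using \<open>i \<noteq> 0\<close> less.prems(1) by (simp add: box_def)
      show "x j \<le> ?x' j \<and> ?x' j \<le> y j" for j using i(2) less.prems(3) by auto
    qed
    then have "step_in d P x ?x'" using assms less.prems(1) i(1) by (auto simp: step_in_def)
    moreover have "(step_in d P)\<^sup>*\<^sup>* ?x' y"
    proof (rule less.hyps)
      show "(\<Sum>j<d. nat (y j - ?x' j)) < (\<Sum>j<d. nat (y j - x j))"
        using i by (intro sum_strict_mono_ex1) auto
    qed (use x' less.prems(2,3) i in auto)
    ultimately show ?thesis by (rule converse_rtranclp_into_rtranclp)
  qed
qed

lemma directed_levels:
  assumes "finite P" and "r \<in> P" and "\<And>c. c \<in> P \<Longrightarrow> (step_in d P)\<^sup>*\<^sup>* r c"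
  shows "(\<lambda>c. c 0) ` P = {r 0..<r 0 + int (width P)}"
proof -
  let ?L = "(\<lambda>c. c 0) ` P"
  define M where "M = Max ?L"
  have "M \<in> ?L" using assms(1,2) unfolding M_def by (intro Max_in) auto
  then obtain c where "c \<in> P" and "c 0 = M" by blast
  have "?L = {r 0..M}"
  proof
    show "?L \<subseteq> {r 0..M}"
    proof
      fix a assume "a \<in> ?L"
      then obtain c' where c': "c' \<in> P" "a = c' 0" by blast
      then have "r 0 \<le> a" using step_in_rtranclp_le[OF assms(3)[OF c'(1)]] by simp
      moreover have "a \<le> M" using assms(1) \<open>a \<in> ?L\<close> by (simp add: M_def)
      ultimately show "a \<in> {r 0..M}" by simp
    qed
    show "{r 0..M} \<subseteq> ?L"
      using step_in_rtranclp_levels[OF assms(3)[OF \<open>c \<in> P\<close>] assms(2)] \<open>c 0 = M\<close> by auto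
  qed
  moreover have "r 0 \<le> M" using assms(1,2) by (auto simp: M_def)
  ultimately show ?thesis by (auto simp: width_def)
qed

section \<open>Assembling a polyhypercube from profiles\<close>

definition codes :: "nat \<Rightarrow> nat \<Rightarrow> (nat \<Rightarrow> nat \<Rightarrow> nat \<times> nat) set" where
  "codes d k = PiE {1..<d} (\<lambda>_. profiles k)"

definition layer :: "nat \<Rightarrow> (nat \<Rightarrow> nat \<Rightarrow> nat \<times> nat) \<Rightarrow> nat \<Rightarrow> cell set" where
  "layer d \<phi> t = box d (int t) (\<lambda>l. seg_bottom (\<phi> l) t) (\<lambda>l. seg_top (\<phi> l) t)"

definition assemble :: "nat \<Rightarrow> nat \<Rightarrow> (nat \<Rightarrow> nat \<Rightarrow> nat \<times> nat) \<Rightarrow> cell set" where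
  "assemble d k \<phi> = (\<Union>t<k. layer d \<phi> t)"

definition corner :: "nat \<Rightarrow> (nat \<Rightarrow> nat \<Rightarrow> nat \<times> nat) \<Rightarrow> nat \<Rightarrow> cell" where
  "corner d \<phi> t = mk_cell d (int t) (\<lambda>l. seg_bottom (\<phi> l) t)"

lemma corner_0 [simp]: "corner d \<phi> 0 = (\<lambda>_. 0)"
  by (simp add: corner_def)

lemma corner_level [simp]: "corner d \<phi> t 0 = int t"
  by (simp add: corner_def)

lemma codes_profile: "\<phi> \<in> codes d k \<Longrightarrow> l \<in> {1..<d} \<Longrightarrow> \<phi> l \<in> profiles k"
  by (auto simp: codes_def)

lemma layer_bounds:
  "\<phi> \<in> codes d k \<Longrightarrow> t < k \<Longrightarrow> l \<in> {1..<d} \<Longrightarrow> seg_bottom (\<phi> l) t \<le> seg_top (\<phi> l) t"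
  by (rule seg_bottom_le_top[OF codes_profile])

lemma corner_in_layer: "0 < d \<Longrightarrow> \<phi> \<in> codes d k \<Longrightarrow> t < k \<Longrightarrow> corner d \<phi> t \<in> layer d \<phi> t"
  unfolding layer_def corner_def by (intro mk_cell_in_box) (auto simp: layer_bounds)

lemma layer_subset_assemble: "t < k \<Longrightarrow> layer d \<phi> t \<subseteq> assemble d k \<phi>"
  by (auto simp: assemble_def)

lemma stratum_assemble: "t < k \<Longrightarrow> stratum (assemble d k \<phi>) (int t) = layer d \<phi> t"
  by (auto simp: stratum_def assemble_def layer_def box_def)

lemma levels_assemble:
  assumes "0 < d" and "\<phi> \<in> codes d k"
  shows "(\<lambda>c. c 0) ` assemble d k \<phi> = {0..<int k}"
proof
  show "(\<lambda>c. c 0) ` assemble d k \<phi> \<subseteq> {0..<int k}"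
    by (auto simp: assemble_def layer_def box_def)
  show "{0..<int k} \<subseteq> (\<lambda>c. c 0) ` assemble d k \<phi>"
  proof
    fix a assume "a \<in> {0..<int k}"
    then have "a \<in> {0..<0 + int k}" by simp
    then obtain t where t: "t < k" "a = int t" unfolding mem_int_interval_iff by auto
    then have "corner d \<phi> t \<in> assemble d k \<phi>"
      using assms corner_in_layer layer_subset_assemble by blast
    then show "a \<in> (\<lambda>c. c 0) ` assemble d k \<phi>" by (rule rev_image_eqI) (simp add: t(2))
  qed
qed

lemma finite_assemble: "finite (assemble d k \<phi>)"
  by (simp add: assemble_def layer_def finite_box)

lemma assemble_subset_cells: "assemble d k \<phi> \<subseteq> cells d"
  unfolding assemble_def layer_def using box_subset_cells by blast

lemma assemble_nonneg:
  assumes "c \<in> assemble d k \<phi>"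
  shows "0 \<le> c i"
proof -
  obtain t where c: "c \<in> box d (int t) (\<lambda>l. seg_bottom (\<phi> l) t) (\<lambda>l. seg_top (\<phi> l) t)"
    using assms by (auto simp: assemble_def layer_def)
  consider "i = 0" | "i \<in> {1..<d}" | "d \<le> i" by force
  then show ?thesis
  proof cases
    case 2
    then have "seg_bottom (\<phi> i) t \<le> c i" using c by (simp add: box_def)
    then show ?thesis using seg_bottom_nonneg[of "\<phi> i" t] by linarith
  qed (use c in \<open>auto simp: box_def cells_def\<close>)
qed

lemma origin_reaches_corner:
  assumes "0 < d" and "\<phi> \<in> codes d k" and "t < k"
  shows "(step_in d (assemble d k \<phi>))\<^sup>*\<^sup>* (\<lambda>_. 0) (corner d \<phi> t)"
  using assms(3)
proof (induction t)
  case 0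
  show ?case by simp
next
  case (Suc t)
  let ?A = "assemble d k \<phi>"
  let ?m = "mk_cell d (int t) (\<lambda>l. seg_bottom (\<phi> l) (Suc t))"
  have between:
    "seg_bottom (\<phi> l) t \<le> seg_bottom (\<phi> l) (Suc t) \<and> seg_bottom (\<phi> l) (Suc t) \<le> seg_top (\<phi> l) t"
    if "l \<in> {1..<d}" for l
    using seg_bottom_Suc_between[OF codes_profile[OF assms(2) that] Suc.prems] .
  have "?m \<in> layer d \<phi> t" unfolding layer_def using assms(1) between by (intro mk_cell_in_box) auto
  moreover have "corner d \<phi> t \<in> layer d \<phi> t"
    using assms(1,2) Suc.prems by (intro corner_in_layer) auto
  moreover have "\<forall>i. corner d \<phi> t i \<le> ?m i" using between by (auto simp: corner_def mk_cell_def)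
  ultimately have "(step_in d ?A)\<^sup>*\<^sup>* (corner d \<phi> t) ?m"
    using Suc.prems layer_subset_assemble unfolding layer_def by (intro rtranclp_step_in_box) auto
  moreover have "step_in d ?A ?m (corner d \<phi> (Suc t))"
  proof -
    have "corner d \<phi> (Suc t) = ?m(0 := ?m 0 + 1)"
      by (simp add: corner_def mk_cell_def fun_eq_iff)
    moreover have "?m \<in> ?A"
      using \<open>?m \<in> layer d \<phi> t\<close> layer_subset_assemble[of t k d \<phi>] Suc.prems by auto
    moreover have "corner d \<phi> (Suc t) \<in> ?A"
      using corner_in_layer[OF assms(1,2) Suc.prems] layer_subset_assemble[OF Suc.prems] by blast
    ultimately show ?thesis using assms(1) unfolding step_in_def by blast
  qed
  ultimately show ?case using Suc by (meson rtranclp.rtrancl_into_rtrancl rtranclp_trans Suc_lessD)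
qed

lemma origin_reaches_assemble:
  assumes "0 < d" and "\<phi> \<in> codes d k" and "c \<in> assemble d k \<phi>"
  shows "(step_in d (assemble d k \<phi>))\<^sup>*\<^sup>* (\<lambda>_. 0) c"
proof -
  obtain t where t: "t < k" and c: "c \<in> layer d \<phi> t" using assms(3) by (auto simp: assemble_def)
  have "corner d \<phi> t \<in> layer d \<phi> t" using assms(1,2) t by (rule corner_in_layer)
  moreover have "\<forall>i. corner d \<phi> t i \<le> c i"
    using c by (auto simp: corner_def mk_cell_def layer_def box_def cells_def)
  ultimately have "(step_in d (assemble d k \<phi>))\<^sup>*\<^sup>* (corner d \<phi> t) c"
    using c t layer_subset_assemble unfolding layer_def by (intro rtranclp_step_in_box) auto
  with origin_reaches_corner[OF assms(1,2) t] show ?thesis by (rule rtranclp_trans)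
qed

lemma origin_in_assemble: "0 < d \<Longrightarrow> 0 < k \<Longrightarrow> \<phi> \<in> codes d k \<Longrightarrow> (\<lambda>_. 0) \<in> assemble d k \<phi>"
  using corner_in_layer[of d \<phi> k 0] layer_subset_assemble[of 0 k d \<phi>] by auto

lemma directed_plateau_assemble:
  assumes "0 < d" and "0 < k" and "\<phi> \<in> codes d k"
  shows "directed_plateau d (assemble d k \<phi>)"
proof -
  let ?A = "assemble d k \<phi>"
  have origin: "(\<lambda>_. 0) \<in> ?A" using assms by (rule origin_in_assemble)
  have reach: "(step_in d ?A)\<^sup>*\<^sup>* (\<lambda>_. 0) c" if "c \<in> ?A" for c
    using assms(1,3) that by (rule origin_reaches_assemble)
  have "(adj_in d ?A)\<^sup>*\<^sup>* x y" if "x \<in> ?A" "y \<in> ?A" for x y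
    using rtranclp_step_in_imp_adj_in[OF reach[OF that(1)]]
      rtranclp_step_in_imp_adj_in[OF reach[OF that(2)]] by (blast intro: rtranclp_trans)
  then have "polyhypercube d ?A"
    using origin finite_assemble assemble_subset_cells unfolding polyhypercube_def by blast
  moreover have "directed d ?A" using origin reach by (auto simp: directed_def)
  moreover have "plateau d ?A a" if "a \<in> (\<lambda>c. c 0) ` ?A" for a
  proof -
    have "a \<in> {0..<0 + int k}" using that levels_assemble[OF assms(1,3)] by simp
    then obtain t where "t < k" "a = int t" unfolding mem_int_interval_iff by auto
    then show ?thesis by (auto simp: plateau_iff_box stratum_assemble layer_def)
  qed
  ultimately show ?thesis by (simp add: directed_plateau_def)
qed

lemma width_assemble: "0 < d \<Longrightarrow> \<phi> \<in> codes d k \<Longrightarrow> width (assemble d k \<phi>) = k"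
  by (simp add: width_def levels_assemble)

lemma lateral_area_assemble:
  assumes "0 < d" and "\<phi> \<in> codes d k"
  shows "lateral_area d (assemble d k \<phi>) = (\<Sum>l\<in>{1..<d}. area k (\<phi> l))"
  unfolding lateral_area_def
proof (rule sum.cong [OF refl])
  fix l assume l: "l \<in> {1..<d}"
  have "(\<lambda>c. (c 0, c l)) ` assemble d k \<phi> = (\<Union>t<k. {int t} \<times> {seg_bottom (\<phi> l) t..seg_top (\<phi> l) t})"
    unfolding assemble_def layer_def image_UN
    using assms l by (intro SUP_cong refl proj_box) (auto simp: layer_bounds)
  also have "card \<dots> = (\<Sum>t<k. card ({int t} \<times> {seg_bottom (\<phi> l) t..seg_top (\<phi> l) t}))"
    by (rule card_UN_disjoint) auto
  also have "\<dots> = area k (\<phi> l)"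
    unfolding area_def
  proof (rule sum.cong [OF refl])
    fix t assume "t \<in> {..<k}"
    then have "1 \<le> fst (\<phi> l t)"
      using profile_segment[OF codes_profile[OF assms(2) l]] by (auto simp: segments_def)
    then show "card ({int t} \<times> {seg_bottom (\<phi> l) t..seg_top (\<phi> l) t}) = fst (\<phi> l t)"
      by (simp add: card_cartesian_product seg_top_def)
  qed
  finally show "card ((\<lambda>c. (c 0, c l)) ` assemble d k \<phi>) = area k (\<phi> l)" .
qed

lemma inj_on_assemble:
  assumes "0 < d"
  shows "inj_on (assemble d k) (codes d k)"
proof (rule inj_onI)
  fix \<phi> \<psi> assume \<phi>: "\<phi> \<in> codes d k" and \<psi>: "\<psi> \<in> codes d k" and eq: "assemble d k \<phi> = assemble d k \<psi>"
  have bounds: "seg_bottom (\<phi> l) t = seg_bottom (\<psi> l) t \<and> seg_top (\<phi> l) t = seg_top (\<psi> l) t"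
    if l: "l \<in> {1..<d}" and t: "t < k" for l t
  proof (rule box_bounds_unique[OF assms _ _ _ l])
    show "box d (int t) (\<lambda>l. seg_bottom (\<phi> l) t) (\<lambda>l. seg_top (\<phi> l) t) =
        box d (int t) (\<lambda>l. seg_bottom (\<psi> l) t) (\<lambda>l. seg_top (\<psi> l) t)"
      using stratum_assemble[OF t, of d \<phi>] stratum_assemble[OF t, of d \<psi>] eq
      by (simp add: layer_def)
  qed (use \<phi> \<psi> t layer_bounds in auto)
  show "\<phi> = \<psi>"
  proof (rule PiE_ext[OF \<phi>[unfolded codes_def] \<psi>[unfolded codes_def]])
    fix l assume l: "l \<in> {1..<d}"
    show "\<phi> l = \<psi> l"
      using bounds[OF l] codes_profile[OF \<phi> l] codes_profile[OF \<psi> l] by (intro profile_eqI) auto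
  qed
qed

lemma translate_translate: "translate s (translate t Q) = translate (\<lambda>i. t i + s i) Q"
  by (auto simp: translate_def image_image add.assoc)

lemma translate_in_transl_class: "t \<in> cells d \<Longrightarrow> translate t Q \<in> transl_class d Q"
  by (auto simp: transl_class_def)

lemma transl_class_translate:
  assumes "t \<in> cells d"
  shows "transl_class d (translate t Q) = transl_class d Q"
proof (intro equalityI subsetI)
  fix R assume "R \<in> transl_class d (translate t Q)"
  then obtain s where "s \<in> cells d" and "R = translate (\<lambda>i. t i + s i) Q"
    by (auto simp: transl_class_def translate_translate)
  moreover have "(\<lambda>i. t i + s i) \<in> cells d" using assms \<open>s \<in> cells d\<close> by (simp add: cells_def)
  ultimately show "R \<in> transl_class d Q" by (simp add: translate_in_transl_class)
next
  fix R assume "R \<in> transl_class d Q"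
  then obtain u where "u \<in> cells d" and "R = translate u Q" by (auto simp: transl_class_def)
  then have "R = translate (\<lambda>i. u i - t i) (translate t Q)"
    by (simp add: translate_translate)
  moreover have "(\<lambda>i. u i - t i) \<in> cells d" using assms \<open>u \<in> cells d\<close> by (simp add: cells_def)
  ultimately show "R \<in> transl_class d (translate t Q)" by (simp add: translate_in_transl_class)
qed

lemma transl_class_eq_imp_eq:
  assumes "(\<lambda>_. 0) \<in> Q" and "(\<lambda>_. 0) \<in> Q'"
    and "\<And>c i. c \<in> Q \<Longrightarrow> 0 \<le> c i" and "\<And>c i. c \<in> Q' \<Longrightarrow> 0 \<le> c i"
    and eq: "transl_class d Q = transl_class d Q'"
  shows "Q = Q'"
proof -
  have "translate (\<lambda>_. 0) Q \<in> transl_class d Q"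
    by (rule translate_in_transl_class) (simp add: cells_def)
  then have "Q \<in> transl_class d Q'" by (simp add: translate_def flip: eq)
  then obtain t where t: "Q = translate t Q'" by (auto simp: transl_class_def)
  have "t = (\<lambda>_. 0)"
  proof
    fix i
    have "t \<in> Q" using assms(2) unfolding t translate_def by force
    then have "0 \<le> t i" using assms(3) by blast
    moreover obtain c where "c \<in> Q'" "(\<lambda>i. c i + t i) = (\<lambda>_. 0)"
      using assms(1) unfolding t translate_def by auto
    then have "c i + t i = 0" "0 \<le> c i" using assms(4) by (auto dest: fun_cong[of _ _ i])
    ultimately show "t i = 0" by simp
  qed
  then show ?thesis using t by (simp add: translate_def)
qed

lemma lateral_area_translate: "lateral_area d (translate r Q) = lateral_area d Q"
  unfolding lateral_area_def
proof (rule sum.cong [OF refl])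
  fix l
  have "(\<lambda>c. (c 0, c l)) ` translate r Q = (\<lambda>(x, y). (x + r 0, y + r l)) ` (\<lambda>c. (c 0, c l)) ` Q"
    by (auto simp: translate_def image_image)
  moreover have "inj (\<lambda>(x :: int, y :: int). (x + r 0, y + r l))"
    by (auto simp: inj_on_def)
  ultimately show "card ((\<lambda>c. (c 0, c l)) ` translate r Q) = card ((\<lambda>c. (c 0, c l)) ` Q)"
    by (simp add: card_image inj_on_subset)
qed

section \<open>Decomposition of a directed plateau polyhypercube\<close>

locale stacked_boxes =
  fixes d k :: nat and P :: "cell set" and r :: cell and lo hi :: "nat \<Rightarrow> nat \<Rightarrow> int"
  assumes d_pos: "0 < d"
    and root: "r \<in> P"
    and reach: "\<And>c. c \<in> P \<Longrightarrow> (step_in d P)\<^sup>*\<^sup>* r c"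
    and levels: "(\<lambda>c. c 0) ` P = {r 0..<r 0 + int k}"
    and strata: "\<And>t. t < k \<Longrightarrow> stratum P (r 0 + int t) = box d (r 0 + int t) (lo t) (hi t)"
begin

lemma box_subset: "t < k \<Longrightarrow> box d (r 0 + int t) (lo t) (hi t) \<subseteq> P"
  using strata[of t] by (auto simp: stratum_def)

lemma eq_UN_boxes: "P = (\<Union>t<k. box d (r 0 + int t) (lo t) (hi t))"
proof
  show "P \<subseteq> (\<Union>t<k. box d (r 0 + int t) (lo t) (hi t))"
  proof
    fix c assume c: "c \<in> P"
    then have "c 0 \<in> {r 0..<r 0 + int k}" using levels by blast
    then obtain t where t: "t < k" "c 0 = r 0 + int t" unfolding mem_int_interval_iff by blast
    then have "c \<in> stratum P (r 0 + int t)" using c by (simp add: stratum_def)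
    then show "c \<in> (\<Union>t<k. box d (r 0 + int t) (lo t) (hi t))" using strata t by blast
  qed
  show "(\<Union>t<k. box d (r 0 + int t) (lo t) (hi t)) \<subseteq> P" using box_subset by blast
qed

lemma root_cell: "r \<in> cells d"
  using root eq_UN_boxes box_subset_cells by blast

lemma lo_le_hi:
  assumes "t < k" and "i \<in> {1..<d}"
  shows "lo t i \<le> hi t i"
proof -
  have "r 0 + int t \<in> (\<lambda>c. c 0) ` P" using levels assms(1) by simp
  then obtain c where "c \<in> stratum P (r 0 + int t)" by (auto simp: stratum_def)
  then show ?thesis using strata[OF assms(1)] assms(2) by (force simp: box_def)
qed

lemma lo_0:
  assumes "i \<in> {1..<d}"
  shows "lo 0 i = r i"
proof -
  have k: "0 < k" using root levels by force
  have "r \<in> stratum P (r 0 + int 0)" using root by (simp add: stratum_def)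
  then have "r \<in> box d (r 0 + int 0) (lo 0) (hi 0)" using strata[OF k] by blast
  then have "lo 0 i \<le> r i" using assms by (simp add: box_def)
  moreover have "mk_cell d (r 0) (lo 0) \<in> box d (r 0 + int 0) (lo 0) (hi 0)"
    using d_pos lo_le_hi[OF k] by (auto intro!: mk_cell_in_box)
  then have "r i \<le> mk_cell d (r 0) (lo 0) i"
    using box_subset[OF k] reach step_in_rtranclp_le by blast
  ultimately show ?thesis using assms by simp
qed

text \<open>
  The lower corner of box \<open>t + 1\<close> is reached by an elementary step. A step along
  \<open>i_l\<close>, \<open>l \<ge> 2\<close>, would start below that box, so the step is along \<open>i_1\<close>
  and starts in box \<open>t\<close>.
\<close>

lemma lo_Suc_between:
  assumes t: "Suc t < k" and i: "i \<in> {1..<d}"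
  shows "lo t i \<le> lo (Suc t) i \<and> lo (Suc t) i \<le> hi t i"
proof -
  let ?m = "mk_cell d (r 0 + int (Suc t)) (lo (Suc t))"
  have m: "?m \<in> box d (r 0 + int (Suc t)) (lo (Suc t)) (hi (Suc t))"
    using d_pos lo_le_hi[OF t] by (auto intro!: mk_cell_in_box)
  then have "(step_in d P)\<^sup>*\<^sup>* r ?m" using reach box_subset[OF t] by blast
  moreover have "?m 0 \<noteq> r 0" by simp
  then have "?m \<noteq> r" by (rule contrapos_nn) simp
  ultimately obtain x where "step_in d P x ?m" by (metis rtranclp.cases)
  then obtain j where x: "x \<in> P" and j: "j < d" and m_eq: "?m = x(j := x j + 1)"
    by (auto simp: step_in_def)
  have "j = 0"
  proof (rule ccontr)
    assume "j \<noteq> 0"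
    then have "x 0 = r 0 + int (Suc t)" and "j \<in> {1..<d}"
      using m_eq j by (auto dest: fun_cong[of _ _ 0])
    then have "x \<in> stratum P (r 0 + int (Suc t))" using x by (simp add: stratum_def)
    then have "lo (Suc t) j \<le> x j"
      using strata[OF t] \<open>j \<in> {1..<d}\<close> by (simp add: box_def)
    moreover have "?m j = x j + 1" using m_eq by (auto dest: fun_cong[of _ _ j])
    ultimately show False using \<open>j \<in> {1..<d}\<close> by simp
  qed
  then have "x 0 = r 0 + int t" and "x i = lo (Suc t) i"
    using m_eq i by (auto dest: fun_cong[of _ _ 0] fun_cong[of _ _ i])
  then have "x \<in> stratum P (r 0 + int t)" using x by (simp add: stratum_def)
  then have "lo t i \<le> x i \<and> x i \<le> hi t i"
    using strata[of t] t i by (simp add: box_def)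
  then show ?thesis using \<open>x i = lo (Suc t) i\<close> by simp
qed

lemma eq_translate_assemble: "\<exists>\<phi>\<in>codes d k. P = translate r (assemble d k \<phi>)"
proof -
  have "\<exists>pr\<in>profiles k. \<forall>t<k. seg_bottom pr t = lo t l - r l \<and> seg_top pr t = hi t l - r l"
    if "l \<in> {1..<d}" for l
    using that lo_0 lo_le_hi lo_Suc_between by (intro profile_of_bounds) auto
  then obtain \<phi>' where \<phi>': "\<forall>l\<in>{1..<d}. \<phi>' l \<in> profiles k \<and>
      (\<forall>t<k. seg_bottom (\<phi>' l) t = lo t l - r l \<and> seg_top (\<phi>' l) t = hi t l - r l)"
    by metis
  define \<phi> where "\<phi> = restrict \<phi>' {1..<d}"
  have "\<phi> \<in> codes d k" using \<phi>' by (simp add: codes_def \<phi>_def)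
  moreover have "translate r (layer d \<phi> t) = box d (r 0 + int t) (lo t) (hi t)" if "t < k" for t
    unfolding layer_def translate_box[OF root_cell]
    using \<phi>' that by (subst add.commute) (intro box_cong, simp add: \<phi>_def)
  ultimately show ?thesis
    by (metis (no_types, lifting) SUP_cong assemble_def eq_UN_boxes lessThan_iff translate_UN)
qed

end

lemma directed_plateau_eq_translate_assemble:
  assumes "0 < d" and "directed_plateau d P" and "width P = k"
  shows "\<exists>\<phi>\<in>codes d k. \<exists>r\<in>cells d. P = translate r (assemble d k \<phi>)"
proof -
  have P: "polyhypercube d P" "directed d P" "\<forall>a\<in>(\<lambda>c. c 0) ` P. plateau d P a"
    using assms(2) by (auto simp: directed_plateau_def)
  obtain r where root: "r \<in> P" and reach: "\<And>c. c \<in> P \<Longrightarrow> (step_in d P)\<^sup>*\<^sup>* r c"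
    using P(2) by (auto simp: directed_def)
  have levels: "(\<lambda>c. c 0) ` P = {r 0..<r 0 + int k}"
    using directed_levels[OF _ root reach] P(1) assms(3) by (auto simp: polyhypercube_def)
  have "\<exists>b. stratum P (r 0 + int t) = box d (r 0 + int t) (fst b) (snd b)" if "t < k" for t
    using P(3) levels that by (simp add: plateau_iff_box)
  then obtain b
    where "\<And>t. t < k \<Longrightarrow> stratum P (r 0 + int t) = box d (r 0 + int t) (fst (b t)) (snd (b t))"
    by metis
  then interpret stacked_boxes d k P r "\<lambda>t. fst (b t)" "\<lambda>t. snd (b t)"
    using assms(1) root reach levels by unfold_locales auto
  show ?thesis using eq_translate_assemble root_cell by blast
qed

lemma p_count_eq_card_codes:
  assumes "0 < d" and "0 < k"
  shows "p_count d k n = card {\<phi> \<in> codes d k. (\<Sum>l\<in>{1..<d}. area k (\<phi> l)) = n}"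
proof -
  let ?A = "{P. directed_plateau d P \<and> width P = k \<and> lateral_area d P = n}"
  let ?C = "{\<phi> \<in> codes d k. (\<Sum>l\<in>{1..<d}. area k (\<phi> l)) = n}"
  have image: "transl_class d ` ?A = (transl_class d \<circ> assemble d k) ` ?C"
  proof (intro equalityI subsetI)
    fix X assume "X \<in> transl_class d ` ?A"
    then obtain P where P: "P \<in> ?A" and X: "X = transl_class d P" by blast
    then obtain \<phi> r where \<phi>: "\<phi> \<in> codes d k" and "r \<in> cells d" "P = translate r (assemble d k \<phi>)"
      using directed_plateau_eq_translate_assemble[OF assms(1)] by blast
    then have "X = transl_class d (assemble d k \<phi>)" and "\<phi> \<in> ?C"
      using X P lateral_area_assemble[OF assms(1) \<phi>]
      by (simp_all add: transl_class_translate lateral_area_translate)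
    then show "X \<in> (transl_class d \<circ> assemble d k) ` ?C" by auto
  next
    fix X assume "X \<in> (transl_class d \<circ> assemble d k) ` ?C"
    then obtain \<phi> where "\<phi> \<in> ?C" and "X = transl_class d (assemble d k \<phi>)" by auto
    then show "X \<in> transl_class d ` ?A"
      using assms directed_plateau_assemble width_assemble lateral_area_assemble by auto
  qed
  have inj: "inj_on (transl_class d \<circ> assemble d k) ?C"
  proof (rule comp_inj_on)
    show "inj_on (assemble d k) ?C"
      using inj_on_assemble[OF assms(1)] by (rule inj_on_subset) auto
    show "inj_on (transl_class d) (assemble d k ` ?C)"
    proof (rule inj_onI)
      fix Q Q' assume "Q \<in> assemble d k ` ?C" "Q' \<in> assemble d k ` ?C"
        and "transl_class d Q = transl_class d Q'"
      then show "Q = Q'"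
        using origin_in_assemble[OF assms] assemble_nonneg
        by (intro transl_class_eq_imp_eq) auto
    qed
  qed
  show ?thesis unfolding p_count_def image using card_image[OF inj] .
qed

theorem theorem2:
  fixes d k n :: nat
  assumes "d \<ge> 3" and "k \<ge> 1" and "n \<ge> (d - 1) * k"
  shows "p_count d k n =
    (\<Sum>j\<in>{j :: nat \<Rightarrow> nat. (\<forall>i. i \<notin> {1..<d} \<longrightarrow> j i = 0) \<and> (\<Sum>l\<in>{1..<d}. j l) = n}.
       \<Prod>l\<in>{1..<d}. ibinom (int (j l) + int k - 2) (int (j l) - int k))"
proof -
  have "p_count d k n = card {\<phi> \<in> PiE {1..<d} (\<lambda>_. profiles k). (\<Sum>l\<in>{1..<d}. area k (\<phi> l)) = n}"
    using assms(1,2) by (simp add: p_count_eq_card_codes codes_def)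
  also have "\<dots> =
      (\<Sum>j\<in>compositions {1..<d} n. \<Prod>l\<in>{1..<d}. card {pr \<in> profiles k. area k pr = j l})"
    by (rule card_PiE_weight) (simp_all add: finite_profiles_area)
  also have "\<dots> = (\<Sum>j\<in>compositions {1..<d} n.
      \<Prod>l\<in>{1..<d}. ibinom (int (j l) + int k - 2) (int (j l) - int k))"
    using assms(2) by (simp add: card_profiles_area ibinom_eq_choose)
  finally show ?thesis by (simp add: compositions_def)
qed

end
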